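(* Let \(G=(V,E)\) be a split graph with clique \(C\) and independent set \(I\) (so \(V=C\cup I\), disjointly), and let \(\sigma=(v_1,\dots,v_n)\) be an MNS ordering of \(V\). Then for every pair of vertices \(v_i\in I\) and \(v_j\in C\) with \(j>i\), the following hold, where \(l:=|\{v_1,\dots,v_{i-1}\}\cap C|\): (1) \(\{v_1,\dots,v_{i-1}\}\cap C\subseteq N(v_i)\); (2) \(\{v_{i+1},\dots,v_{i+\deg(v_i)-l}\}\subseteq N(v_i)\).
   Context: \(N(v)\) is the neighborhood of \(v\) and \(\deg(v)=|N(v)|\). An MNS (Maximum Neighborhood Search) ordering is a vertex ordering produced as follows for some start vertex \(s\) and some tie-breaking: all vertices get label \(\emptyset\), then \(s\) gets label \(\{n+1\}\); for \(i=1,\dots,n\), pick an unnumbered vertex whose label is maximal under set inclusion among the labels of unnumbered vertices, set it as \(v_i\), and add \(i\) to the label of each unnumbered neighbor of it. *)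

theory Defs
  imports Main
begin

definition simple_graph :: "'a set \<Rightarrow> ('a \<Rightarrow> 'a \<Rightarrow> bool) \<Rightarrow> bool" where
  "simple_graph V E \<longleftrightarrow> finite V \<and> (\<forall>u v. E u v \<longrightarrow> u \<in> V \<and> v \<in> V)
     \<and> (\<forall>u v. E u v \<longrightarrow> E v u) \<and> (\<forall>v. \<not> E v v)"

definition nbhd :: "'a set \<Rightarrow> ('a \<Rightarrow> 'a \<Rightarrow> bool) \<Rightarrow> 'a \<Rightarrow> 'a set" where
  "nbhd V E v = {u \<in> V. E v u}"

definition deg :: "'a set \<Rightarrow> ('a \<Rightarrow> 'a \<Rightarrow> bool) \<Rightarrow> 'a \<Rightarrow> nat" where
  "deg V E v = card (nbhd V E v)"

definition split_graph :: "'a set \<Rightarrow> ('a \<Rightarrow> 'a \<Rightarrow> bool) \<Rightarrow> 'a set \<Rightarrow> 'a set \<Rightarrow> bool" where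
  "split_graph V E C I \<longleftrightarrow> simple_graph V E \<and> C \<union> I = V \<and> C \<inter> I = {}
     \<and> (\<forall>u\<in>C. \<forall>v\<in>C. u \<noteq> v \<longrightarrow> E u v) \<and> (\<forall>u\<in>I. \<forall>v\<in>I. \<not> E u v)"

text \<open>The ordering is a list \<sigma>, with v_i = \<sigma> ! (i - 1) for 1 \<le> i \<le> n.
  Label of vertex w at the start of step i (i.e. after v_1..v_(i-1) have been numbered):
  the indices j < i of numbered neighbours, plus n+1 if w is the start vertex s.\<close>
definition mns_label :: "('a \<Rightarrow> 'a \<Rightarrow> bool) \<Rightarrow> 'a list \<Rightarrow> 'a \<Rightarrow> nat \<Rightarrow> 'a \<Rightarrow> nat set" where
  "mns_label E \<sigma> s i w =
     {j. 1 \<le> j \<and> j < i \<and> E (\<sigma> ! (j - 1)) w} \<union> (if w = s then {length \<sigma> + 1} else {})"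

definition is_MNS_ordering :: "'a set \<Rightarrow> ('a \<Rightarrow> 'a \<Rightarrow> bool) \<Rightarrow> 'a list \<Rightarrow> bool" where
  "is_MNS_ordering V E \<sigma> \<longleftrightarrow> distinct \<sigma> \<and> set \<sigma> = V \<and>
     (\<exists>s\<in>V. \<forall>i\<in>{1..length \<sigma>}. \<forall>w\<in>set (drop (i - 1) \<sigma>).
        \<not> (mns_label E \<sigma> s i (\<sigma> ! (i - 1)) \<subset> mns_label E \<sigma> s i w))"

end

theory Submission
  imports Defs
begin

(* Write x = v_i for the independent vertex. By maximality of x at step i, its label, which
   consists of clique indices only, cannot be a proper subset of the label of a later clique
   vertex, which contains every earlier clique index; so both labels are exactly the earlier
   clique indices, which gives (1). For (2), suppose v_{i+1}, ..., v_{m-1} are neighbours of x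
   but v_m is not, while some later neighbour r of x is still unnumbered at step m. Every
   earlier neighbour of v_m is a clique vertex different from r, hence a neighbour of r, and
   r is moreover adjacent to x: the label of v_m at step m is a proper subset of that of r,
   contradicting maximality. Since the earlier neighbours of x are among the l earlier clique
   vertices, x has at least deg(x) - l later neighbours, so induction on m gives (2). *)

definition nbr_indices_before :: "('a \<Rightarrow> 'a \<Rightarrow> bool) \<Rightarrow> 'a list \<Rightarrow> nat \<Rightarrow> 'a \<Rightarrow> nat set" where
  "nbr_indices_before E \<sigma> m w = {k. 1 \<le> k \<and> k < m \<and> E (\<sigma> ! (k - 1)) w}"

lemma mns_label_eq_nbr_indices_before:
  "w \<noteq> s \<Longrightarrow> mns_label E \<sigma> s m w = nbr_indices_before E \<sigma> m w"
  by (simp add: mns_label_def nbr_indices_before_def)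

(* The start vertex is forced to be v_1, since its initial label {n+1} strictly contains the
   empty labels of all other vertices; from step 2 on, labels are plain neighbour-index sets. *)
lemma is_MNS_ordering_maximal:
  assumes "is_MNS_ordering V E \<sigma>" and "1 \<le> m" "m \<le> p" "p \<le> length \<sigma>"
  shows "\<not> nbr_indices_before E \<sigma> m (\<sigma> ! (m - 1)) \<subset> nbr_indices_before E \<sigma> m (\<sigma> ! (p - 1))"
proof (cases "m = 1")
  case True
  then show ?thesis by (auto simp: nbr_indices_before_def)
next
  case False
  from assms(1) obtain s where "s \<in> V" and dist: "distinct \<sigma>" and set: "set \<sigma> = V"
    and max: "\<forall>i\<in>{1..length \<sigma>}. \<forall>w\<in>set (drop (i - 1) \<sigma>).
        \<not> mns_label E \<sigma> s i (\<sigma> ! (i - 1)) \<subset> mns_label E \<sigma> s i w"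
    unfolding is_MNS_ordering_def by blast
  have s_first: "s = \<sigma> ! 0"
  proof (rule ccontr)
    assume "s \<noteq> \<sigma> ! 0"
    then have "mns_label E \<sigma> s 1 (\<sigma> ! 0) \<subset> mns_label E \<sigma> s 1 s"
      by (auto simp: mns_label_def)
    moreover have "s \<in> set (drop (1 - 1) \<sigma>)" "1 \<in> {1..length \<sigma>}"
      using \<open>s \<in> V\<close> set assms by auto
    ultimately show False using max by fastforce
  qed
  have "m - 1 < length \<sigma>" "p - 1 < length \<sigma>" "\<sigma> \<noteq> []"
    using False assms(2-4) by auto
  then have "\<sigma> ! (m - 1) \<noteq> s" "\<sigma> ! (p - 1) \<noteq> s"
    using False assms(2-4) s_first nth_eq_iff_index_eq[OF dist, of "m - 1" 0]
      nth_eq_iff_index_eq[OF dist, of "p - 1" 0] by auto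
  moreover have "\<sigma> ! (p - 1) \<in> set (drop (m - 1) \<sigma>)"
  proof -
    have "drop (m - 1) \<sigma> ! (p - m) = \<sigma> ! (p - 1)" "p - m < length (drop (m - 1) \<sigma>)"
      using assms(2-4) by auto
    then show ?thesis by (metis nth_mem)
  qed
  moreover have "m \<in> {1..length \<sigma>}" using assms(2-4) by auto
  ultimately show ?thesis
    using max by (metis mns_label_eq_nbr_indices_before)
qed

locale split_MNS =
  fixes V C I :: "'a set" and E :: "'a \<Rightarrow> 'a \<Rightarrow> bool" and \<sigma> :: "'a list"
  assumes split: "split_graph V E C I" and mns: "is_MNS_ordering V E \<sigma>"
begin

abbreviation v :: "nat \<Rightarrow> 'a" where "v k \<equiv> \<sigma> ! (k - 1)"

abbreviation clique_indices_before :: "nat \<Rightarrow> nat set" where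
  "clique_indices_before m \<equiv> {k. 1 \<le> k \<and> k < m \<and> v k \<in> C}"

definition later_nbr_indices :: "nat \<Rightarrow> nat set" where
  "later_nbr_indices i = {p. i < p \<and> p \<le> length \<sigma> \<and> E (v i) (v p)}"

lemma adj_sym: "E u w \<Longrightarrow> E w u"
  and adj_in_V: "E u w \<Longrightarrow> w \<in> V"
  and clique_adj: "u \<in> C \<Longrightarrow> w \<in> C \<Longrightarrow> u \<noteq> w \<Longrightarrow> E u w"
  and adj_irrefl: "\<not> E u u"
  and nbr_of_indep_in_clique: "u \<in> I \<Longrightarrow> E u w \<Longrightarrow> w \<in> C"
  and in_indep_if_not_clique: "w \<in> V \<Longrightarrow> w \<notin> C \<Longrightarrow> w \<in> I"
  using split unfolding split_graph_def simple_graph_def by blast+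

lemma v_in_V: "1 \<le> k \<Longrightarrow> k \<le> length \<sigma> \<Longrightarrow> v k \<in> V"
  using mns unfolding is_MNS_ordering_def by auto

lemma v_eq_iff:
  assumes "1 \<le> k" "k \<le> length \<sigma>" "1 \<le> k'" "k' \<le> length \<sigma>"
  shows "v k = v k' \<longleftrightarrow> k = k'"
  using assms mns nth_eq_iff_index_eq[of \<sigma> "k - 1" "k' - 1"]
  unfolding is_MNS_ordering_def by auto

lemma vertex_position:
  assumes "w \<in> V"
  obtains k where "1 \<le> k" "k \<le> length \<sigma>" "w = v k"
proof -
  obtain p where "p < length \<sigma>" "w = \<sigma> ! p"
    using assms mns unfolding is_MNS_ordering_def by (metis in_set_conv_nth)
  then show thesis using that[of "p + 1"] by auto
qed

lemma nbr_indices_before_eq_clique_indices: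
  assumes "v i \<in> I" "1 \<le> i" "i \<le> q" "q \<le> length \<sigma>" "v q \<in> C"
  shows "nbr_indices_before E \<sigma> i (v i) = clique_indices_before i"
    and "nbr_indices_before E \<sigma> i (v q) = clique_indices_before i"
proof -
  have "nbr_indices_before E \<sigma> i (v i) \<subseteq> clique_indices_before i"
    using assms(1) by (auto simp: nbr_indices_before_def dest: adj_sym nbr_of_indep_in_clique)
  moreover have "clique_indices_before i \<subseteq> nbr_indices_before E \<sigma> i (v q)"
    using assms(3-5) v_eq_iff[of _ q] by (auto simp: nbr_indices_before_def intro!: clique_adj)
  moreover have "\<not> nbr_indices_before E \<sigma> i (v i) \<subset> nbr_indices_before E \<sigma> i (v q)"
    using is_MNS_ordering_maximal[OF mns] assms(2-4) by blast
  ultimately show "nbr_indices_before E \<sigma> i (v i) = clique_indices_before i"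
    and "nbr_indices_before E \<sigma> i (v q) = clique_indices_before i"
    by auto
qed

lemma earlier_clique_vertices_adjacent:
  assumes "v i \<in> I" "1 \<le> i" "i \<le> j" "j \<le> length \<sigma>" "v j \<in> C"
  shows "{v k | k. 1 \<le> k \<and> k < i} \<inter> C \<subseteq> nbhd V E (v i)"
proof
  fix u assume "u \<in> {v k | k. 1 \<le> k \<and> k < i} \<inter> C"
  then obtain k where "k \<in> clique_indices_before i" "u = v k" by blast
  then have "E u (v i)"
    using nbr_indices_before_eq_clique_indices(1)[OF assms] by (auto simp: nbr_indices_before_def)
  then show "u \<in> nbhd V E (v i)" by (auto simp: nbhd_def dest: adj_sym adj_in_V)
qed

lemma deg_le_earlier_clique_plus_later_nbrs:
  assumes "v i \<in> I" "1 \<le> i"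
  shows "deg V E (v i)
    \<le> card ({v k | k. 1 \<le> k \<and> k < i} \<inter> C) + card (later_nbr_indices i)"
proof -
  have "nbhd V E (v i) \<subseteq> ({v k | k. 1 \<le> k \<and> k < i} \<inter> C) \<union> v ` later_nbr_indices i"
  proof
    fix w assume "w \<in> nbhd V E (v i)"
    then have "E (v i) w" "w \<in> V" by (auto simp: nbhd_def)
    moreover obtain p where "1 \<le> p" "p \<le> length \<sigma>" "w = v p"
      using vertex_position[OF \<open>w \<in> V\<close>] .
    moreover have "p \<noteq> i"
      using \<open>E (v i) w\<close> \<open>w = v p\<close> adj_irrefl by auto
    ultimately show "w \<in> ({v k | k. 1 \<le> k \<and> k < i} \<inter> C) \<union> v ` later_nbr_indices i"
      using assms nbr_of_indep_in_clique
      by (cases "p < i") (auto simp: later_nbr_indices_def)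
  qed
  moreover have "finite ({v k | k. 1 \<le> k \<and> k < i} \<inter> C)" "finite (later_nbr_indices i)"
    by (auto simp: later_nbr_indices_def)
  ultimately have "card (nbhd V E (v i))
      \<le> card ({v k | k. 1 \<le> k \<and> k < i} \<inter> C) + card (v ` later_nbr_indices i)"
    by (meson card_Un_le card_mono finite_UnI finite_imageI le_trans)
  then show ?thesis
    unfolding deg_def using card_image_le[of "later_nbr_indices i" v] \<open>finite (later_nbr_indices i)\<close>
    by linarith
qed

lemma next_vertex_adjacent_to_indep:
  assumes "v i \<in> I" "1 \<le> i" "i < m" "m \<le> p" "p \<le> length \<sigma>" "E (v i) (v p)"
    and between: "\<And>k. i < k \<Longrightarrow> k < m \<Longrightarrow> E (v i) (v k)"
  shows "E (v i) (v m)"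
proof (rule ccontr)
  assume not_adj: "\<not> E (v i) (v m)"
  have "v p \<in> C" using assms(1,6) by (rule nbr_of_indep_in_clique)
  have "nbr_indices_before E \<sigma> m (v m) \<subseteq> nbr_indices_before E \<sigma> m (v p)"
  proof
    fix k assume k: "k \<in> nbr_indices_before E \<sigma> m (v m)"
    then have "1 \<le> k" "k < m" "E (v k) (v m)" by (auto simp: nbr_indices_before_def)
    have "k \<noteq> i" using \<open>E (v k) (v m)\<close> not_adj by auto
    have "v k \<in> C"
    proof (cases "k < i")
      case True
      show ?thesis
      proof (rule ccontr)
        assume "v k \<notin> C"
        then have "v k \<in> I"
          using v_in_V[of k] \<open>1 \<le> k\<close> \<open>k < m\<close> assms(4,5) in_indep_if_not_clique by simp
        then have "v m \<in> C" using \<open>E (v k) (v m)\<close> by (rule nbr_of_indep_in_clique)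
        then have "nbr_indices_before E \<sigma> i (v m) = clique_indices_before i"
          using nbr_indices_before_eq_clique_indices(2) assms(1-5) by simp
        then show False
          using \<open>v k \<notin> C\<close> \<open>1 \<le> k\<close> True \<open>E (v k) (v m)\<close> by (auto simp: nbr_indices_before_def)
      qed
    next
      case False
      then show ?thesis
        using \<open>k \<noteq> i\<close> \<open>k < m\<close> between assms(1) nbr_of_indep_in_clique by auto
    qed
    moreover have "v k \<noteq> v p" using v_eq_iff[of k p] \<open>1 \<le> k\<close> \<open>k < m\<close> assms(4,5) by auto
    ultimately show "k \<in> nbr_indices_before E \<sigma> m (v p)"
      using \<open>v p \<in> C\<close> k clique_adj by (auto simp: nbr_indices_before_def)
  qed
  moreover have "i \<in> nbr_indices_before E \<sigma> m (v p) - nbr_indices_before E \<sigma> m (v m)"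
    using assms(2,3,6) not_adj by (auto simp: nbr_indices_before_def)
  ultimately have "nbr_indices_before E \<sigma> m (v m) \<subset> nbr_indices_before E \<sigma> m (v p)" by blast
  then show False using is_MNS_ordering_maximal[OF mns] assms(2-5) by simp
qed

lemma initial_later_vertices_adjacent_to_indep:
  assumes "v i \<in> I" "1 \<le> i"
  shows "i < m \<Longrightarrow> m \<le> i + card (later_nbr_indices i) \<Longrightarrow> m \<le> length \<sigma> \<and> E (v i) (v m)"
proof (induction m rule: less_induct)
  case (less m)
  then have between: "\<And>k. i < k \<Longrightarrow> k < m \<Longrightarrow> E (v i) (v k)" by simp
  have "{i<..<m} \<subseteq> later_nbr_indices i"
    using less by (auto simp: later_nbr_indices_def)
  moreover have "card {i<..<m} < card (later_nbr_indices i)" using less.prems by simp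
  ultimately obtain p where "p \<in> later_nbr_indices i" "p \<notin> {i<..<m}"
    by (metis card_mono finite_greaterThanLessThan not_less subsetI)
  then have "m \<le> p" "p \<le> length \<sigma>" "E (v i) (v p)" by (auto simp: later_nbr_indices_def)
  then show ?case
    using next_vertex_adjacent_to_indep[OF assms less.prems(1)] between by simp
qed

end

theorem lemma15:
  fixes V C I :: "'a set" and E :: "'a \<Rightarrow> 'a \<Rightarrow> bool" and \<sigma> :: "'a list" and i j :: nat
  assumes "split_graph V E C I"
    and "is_MNS_ordering V E \<sigma>"
    and "1 \<le> i" and "i < j" and "j \<le> length \<sigma>"
    and "\<sigma> ! (i - 1) \<in> I" and "\<sigma> ! (j - 1) \<in> C"
  defines "l \<equiv> card ({\<sigma> ! (k - 1) | k. 1 \<le> k \<and> k < i} \<inter> C)"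
  shows "{\<sigma> ! (k - 1) | k. 1 \<le> k \<and> k < i} \<inter> C \<subseteq> nbhd V E (\<sigma> ! (i - 1))
    \<and> {\<sigma> ! (k - 1) | k. i + 1 \<le> k \<and> k \<le> i + (deg V E (\<sigma> ! (i - 1)) - l)}
           \<subseteq> nbhd V E (\<sigma> ! (i - 1))"
proof -
  interpret split_MNS V C I E \<sigma>
    using assms(1,2) by unfold_locales
  have "deg V E (v i) - l \<le> card (later_nbr_indices i)"
    using deg_le_earlier_clique_plus_later_nbrs[OF assms(6,3)] unfolding l_def by linarith
  then have "{v k | k. i + 1 \<le> k \<and> k \<le> i + (deg V E (v i) - l)} \<subseteq> nbhd V E (v i)"
    using initial_later_vertices_adjacent_to_indep[OF assms(6,3)] v_in_V
    by (fastforce simp: nbhd_def)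
  moreover have "{v k | k. 1 \<le> k \<and> k < i} \<inter> C \<subseteq> nbhd V E (v i)"
    using earlier_clique_vertices_adjacent[OF assms(6,3) _ assms(5,7)] assms(4) by simp
  ultimately show ?thesis by blast
qed

end
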